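(* Let $d\ge1$ and let $X_1,\dots,X_d$ be random variables with $X_i\sim\mathrm{Bernoulli}(p_i)$ satisfying $\mathbb{E}[X_iX_j]\le p_ip_j$ for all $i\neq j$. Let $\tilde X_1,\dots,\tilde X_d$ be mutually independent with $\tilde X_i$ equal in distribution to $X_i$, and set $Z=\sum_{i=1}^dX_i$, $\tilde Z=\sum_{i=1}^d\tilde X_i$. Then $\mathbb{P}(Z>0)\ge\frac12\mathbb{P}(\tilde Z>0)$. *)

theory Defs
  imports "HOL-Probability.Probability"
begin

definition bernoulli_rv :: "'a measure \<Rightarrow> ('a \<Rightarrow> real) \<Rightarrow> real \<Rightarrow> bool" where
  "bernoulli_rv M X p \<longleftrightarrow> X \<in> borel_measurable M \<and> (AE x in M. X x \<in> {0, 1})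
     \<and> measure M {x \<in> space M. X x = 1} = p"

end

theory Submission
  imports Defs
begin

text \<open>
  Write \<open>S = \<Sum>i p\<^sub>i\<close>. Pairwise non-positive correlation gives \<open>E[Z] = S\<close> and
  \<open>E[Z\<^sup>2] \<le> S + S\<^sup>2\<close>, so the second moment method yields \<open>P(Z > 0) \<ge> S / (1 + S)\<close>.
  On the other side, the union bound gives \<open>P(Z' > 0) \<le> min 1 S\<close> for the sum \<open>Z'\<close> of the
  copies, and \<open>S / (1 + S) \<ge> min 1 S / 2\<close>. The independence of the copies is thus only used
  to know that they are measurable.
\<close>

lemma (in finite_measure) integrable_AE_zero_one:
  assumes "X \<in> borel_measurable M" and "AE x in M. X x \<in> {0, 1 :: real}"
  shows "integrable M X"
proof (rule integrable_cong_AE_imp)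
  let ?B = "{x \<in> space M. X x = 1}"
  have "?B \<in> sets M" using assms(1) by measurable
  then show "integrable M (indicator ?B :: _ \<Rightarrow> real)" by (simp add: less_top[symmetric])
  show "AE x in M. indicator ?B x = X x"
    using assms(2) AE_space by eventually_elim (auto simp: indicator_def)
qed (use assms(1) in simp)

lemma bernoulli_rv_AE_zero_one:
  "bernoulli_rv M X p \<Longrightarrow> AE x in M. X x \<in> {0, 1}"
  by (simp add: bernoulli_rv_def)

lemma bernoulli_rv_measurable:
  "bernoulli_rv M X p \<Longrightarrow> X \<in> borel_measurable M"
  by (simp add: bernoulli_rv_def)

lemma (in finite_measure) bernoulli_rv_integrable:
  "bernoulli_rv M X p \<Longrightarrow> integrable M X"
  by (intro integrable_AE_zero_one bernoulli_rv_measurable bernoulli_rv_AE_zero_one)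

lemma (in finite_measure) bernoulli_rv_integrable_mult:
  assumes "bernoulli_rv M X p" and "bernoulli_rv M X' p'"
  shows "integrable M (\<lambda>x. X x * X' x)"
proof (rule integrable_AE_zero_one)
  show "(\<lambda>x. X x * X' x) \<in> borel_measurable M"
    using assms[THEN bernoulli_rv_measurable] by simp
  show "AE x in M. X x * X' x \<in> {0, 1}"
    using assms[THEN bernoulli_rv_AE_zero_one] by eventually_elim auto
qed

lemma bernoulli_rv_measure_nonzero:
  assumes "bernoulli_rv M X p"
  shows "measure M {x \<in> space M. X x \<noteq> 0} = p"
proof -
  have X: "X \<in> borel_measurable M" using assms by (rule bernoulli_rv_measurable)
  have "measure M {x \<in> space M. X x \<noteq> 0} = measure M {x \<in> space M. X x = 1}"
  proof (rule measure_eq_AE)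
    show "AE x in M. (x \<in> {x \<in> space M. X x \<noteq> 0}) = (x \<in> {x \<in> space M. X x = 1})"
      using bernoulli_rv_AE_zero_one[OF assms] by eventually_elim auto
    show "{x \<in> space M. X x \<noteq> 0} \<in> sets M" using X by measurable
    show "{x \<in> space M. X x = 1} \<in> sets M" using X by measurable
  qed
  also have "\<dots> = p" using assms by (simp only: bernoulli_rv_def)
  finally show ?thesis .
qed

lemma (in prob_space) bernoulli_rv_expectation:
  assumes "bernoulli_rv M X p"
  shows "expectation X = p"
proof -
  let ?B = "{x \<in> space M. X x = 1}"
  have "?B \<in> sets M" using bernoulli_rv_measurable[OF assms] by measurable
  have "AE x in M. X x = indicator ?B x"
    using bernoulli_rv_AE_zero_one[OF assms] AE_space by eventually_elim (auto simp: indicator_def)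
  then have "expectation X = expectation (indicator ?B)"
    by (intro integral_cong_AE) (use bernoulli_rv_measurable[OF assms] \<open>?B \<in> sets M\<close> in auto)
  also have "\<dots> = prob ?B" using \<open>?B \<in> sets M\<close> by simp
  finally show ?thesis using assms by (simp add: bernoulli_rv_def)
qed

lemma (in prob_space) bernoulli_rv_expectation_square:
  assumes "bernoulli_rv M X p"
  shows "expectation (\<lambda>x. X x * X x) = p"
proof -
  have "AE x in M. X x * X x = X x"
    using bernoulli_rv_AE_zero_one[OF assms] by eventually_elim auto
  then have "expectation (\<lambda>x. X x * X x) = expectation X"
    by (intro integral_cong_AE) (use bernoulli_rv_measurable[OF assms] in auto)
  then show ?thesis using bernoulli_rv_expectation[OF assms] by simp
qed

lemma (in prob_space) second_moment_sum_bernoulli_le: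
  assumes "finite I"
    and bern: "\<And>i. i \<in> I \<Longrightarrow> bernoulli_rv M (X i) (p i)"
    and corr: "\<And>i j. i \<in> I \<Longrightarrow> j \<in> I \<Longrightarrow> i \<noteq> j \<Longrightarrow>
                 expectation (\<lambda>x. X i x * X j x) \<le> p i * p j"
  shows "expectation (\<lambda>x. (\<Sum>i\<in>I. X i x)\<^sup>2) \<le> (\<Sum>i\<in>I. p i) + (\<Sum>i\<in>I. p i)\<^sup>2"
proof -
  have p_nonneg: "p i \<ge> 0" if "i \<in> I" for i
    using bernoulli_rv_measure_nonzero[OF bern[OF that]] measure_nonneg by metis
  have moment_le: "expectation (\<lambda>x. X i x * X j x) \<le> (if i = j then p i else 0) + p i * p j"
    if "i \<in> I" "j \<in> I" for i j
    using corr[OF that] bernoulli_rv_expectation_square[OF bern] that p_nonneg by auto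
  have "expectation (\<lambda>x. (\<Sum>i\<in>I. X i x)\<^sup>2)
      = expectation (\<lambda>x. \<Sum>i\<in>I. \<Sum>j\<in>I. X i x * X j x)"
    by (simp add: power2_eq_square sum_product)
  also have "\<dots> = (\<Sum>i\<in>I. \<Sum>j\<in>I. expectation (\<lambda>x. X i x * X j x))"
    using bernoulli_rv_integrable_mult[OF bern bern] by (simp add: integrable_sum)
  also have "\<dots> \<le> (\<Sum>i\<in>I. \<Sum>j\<in>I. (if i = j then p i else 0) + p i * p j)"
    using moment_le by (intro sum_mono) auto
  also have "\<dots> = (\<Sum>i\<in>I. p i) + (\<Sum>i\<in>I. p i)\<^sup>2"
    using assms(1) by (simp add: sum.distrib power2_eq_square sum_product)
  finally show ?thesis .
qed

lemma (in prob_space) prob_pos_ge_quadratic: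
  assumes "integrable M Z" and "integrable M (\<lambda>x. (Z x)\<^sup>2)" and "t \<ge> 0"
  shows "2 * t * expectation Z - t\<^sup>2 * expectation (\<lambda>x. (Z x)\<^sup>2) \<le> prob {x \<in> space M. Z x > 0}"
proof -
  let ?A = "{x \<in> space M. Z x > 0}"
  have "?A \<in> sets M" using borel_measurable_integrable[OF assms(1)] by measurable
  have pointwise: "2 * t * Z x - t\<^sup>2 * (Z x)\<^sup>2 \<le> indicator ?A x" if "x \<in> space M" for x
  proof (cases "Z x > 0")
    case True
    have "2 * t * Z x - t\<^sup>2 * (Z x)\<^sup>2 = 1 - (1 - t * Z x)\<^sup>2"
      by (simp add: power2_eq_square algebra_simps)
    with True that show ?thesis by simp
  next
    case False
    with assms(3) have "2 * t * Z x \<le> 0" by (simp add: mult_nonneg_nonpos)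
    moreover have "t\<^sup>2 * (Z x)\<^sup>2 \<ge> 0" by simp
    ultimately have "2 * t * Z x - t\<^sup>2 * (Z x)\<^sup>2 \<le> 0" by linarith
    with False show ?thesis by (simp add: indicator_def)
  qed
  have "2 * t * expectation Z - t\<^sup>2 * expectation (\<lambda>x. (Z x)\<^sup>2)
      = expectation (\<lambda>x. 2 * t * Z x - t\<^sup>2 * (Z x)\<^sup>2)"
    using assms by simp
  also have "\<dots> \<le> expectation (indicator ?A)"
    using pointwise assms \<open>?A \<in> sets M\<close> by (intro integral_mono) (auto simp: less_top[symmetric])
  also have "\<dots> = prob ?A" using \<open>?A \<in> sets M\<close> by simp
  finally show ?thesis .
qed

lemma (in prob_space) prob_sum_bernoulli_pos_ge:
  assumes "finite I"
    and bern: "\<And>i. i \<in> I \<Longrightarrow> bernoulli_rv M (X i) (p i)"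
    and corr: "\<And>i j. i \<in> I \<Longrightarrow> j \<in> I \<Longrightarrow> i \<noteq> j \<Longrightarrow>
                 expectation (\<lambda>x. X i x * X j x) \<le> p i * p j"
  shows "(\<Sum>i\<in>I. p i) / (1 + (\<Sum>i\<in>I. p i)) \<le> prob {x \<in> space M. (\<Sum>i\<in>I. X i x) > 0}"
proof -
  define S where "S = (\<Sum>i\<in>I. p i)"
  define Z where "Z x = (\<Sum>i\<in>I. X i x)" for x
  have "S \<ge> 0"
    unfolding S_def using bernoulli_rv_measure_nonzero[OF bern] measure_nonneg by (metis sum_nonneg)
  have int_Z: "integrable M Z"
    unfolding Z_def using bernoulli_rv_integrable[OF bern] by auto
  have int_Z2: "integrable M (\<lambda>x. (Z x)\<^sup>2)"
    unfolding Z_def power2_eq_square sum_product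
    using bernoulli_rv_integrable_mult[OF bern bern] by (simp add: integrable_sum)
  have mean: "expectation Z = S"
    unfolding Z_def S_def using bernoulli_rv_integrable[OF bern] bernoulli_rv_expectation[OF bern]
    by simp
  have second_moment: "expectation (\<lambda>x. (Z x)\<^sup>2) \<le> S + S\<^sup>2"
    unfolding Z_def S_def by (rule second_moment_sum_bernoulli_le[OF assms])
  \<comment> \<open>the minimiser \<open>S / (S + S\<^sup>2)\<close> of \<open>t\<^sup>2 (S + S\<^sup>2) - 2 t S\<close>\<close>
  define t where "t = 1 / (1 + S)"
  have "t \<ge> 0" using \<open>S \<ge> 0\<close> by (simp add: t_def)
  have "S / (1 + S) = 2 * t * S - t\<^sup>2 * (S + S\<^sup>2)"
  proof -
    have "S + S\<^sup>2 = S * (1 + S)" "1 + S \<noteq> 0"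
      using \<open>S \<ge> 0\<close> by (auto simp: power2_eq_square algebra_simps)
    then show ?thesis by (simp add: t_def power2_eq_square diff_divide_distrib[symmetric])
  qed
  also have "\<dots> \<le> 2 * t * expectation Z - t\<^sup>2 * expectation (\<lambda>x. (Z x)\<^sup>2)"
    using mean mult_left_mono[OF second_moment, of "t\<^sup>2"] by simp
  also have "\<dots> \<le> prob {x \<in> space M. Z x > 0}"
    using int_Z int_Z2 \<open>t \<ge> 0\<close> by (rule prob_pos_ge_quadratic)
  finally show ?thesis by (simp add: S_def Z_def)
qed

lemma (in prob_space) prob_sum_pos_le_sum_prob_nonzero:
  assumes "finite I" and "\<And>i. i \<in> I \<Longrightarrow> Y i \<in> borel_measurable M"
  shows "prob {y \<in> space M. (\<Sum>i\<in>I. Y i y :: real) > 0} \<le> (\<Sum>i\<in>I. prob {y \<in> space M. Y i y \<noteq> 0})"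
proof -
  have "{y \<in> space M. (\<Sum>i\<in>I. Y i y) > 0} \<subseteq> (\<Union>i\<in>I. {y \<in> space M. Y i y \<noteq> 0})"
  proof
    fix y assume y: "y \<in> {y \<in> space M. (\<Sum>i\<in>I. Y i y) > 0}"
    then have "(\<Sum>i\<in>I. Y i y) \<noteq> 0" by simp
    then obtain i where "i \<in> I" "Y i y \<noteq> 0" by (rule sum.not_neutral_contains_not_neutral)
    with y show "y \<in> (\<Union>i\<in>I. {y \<in> space M. Y i y \<noteq> 0})" by auto
  qed
  then have "prob {y \<in> space M. (\<Sum>i\<in>I. Y i y) > 0} \<le> prob (\<Union>i\<in>I. {y \<in> space M. Y i y \<noteq> 0})"
    using assms by (intro finite_measure_mono sets.finite_UN) auto
  also have "\<dots> \<le> (\<Sum>i\<in>I. prob {y \<in> space M. Y i y \<noteq> 0})"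
    using assms by (intro measure_UNION_le) auto
  finally show ?thesis .
qed

lemma measure_nonzero_eq_of_distr_eq:
  assumes "Y \<in> borel_measurable N" and "X \<in> borel_measurable M"
    and "distr N borel Y = distr M borel X"
  shows "measure N {y \<in> space N. Y y \<noteq> (0 :: real)} = measure M {x \<in> space M. X x \<noteq> 0}"
proof -
  have "measure N {y \<in> space N. Y y \<noteq> 0} = measure (distr N borel Y) (- {0})"
    using assms(1) by (subst measure_distr) (auto intro!: arg_cong[where f = "measure N"])
  also have "\<dots> = measure (distr M borel X) (- {0})"
    using assms(3) by simp
  also have "\<dots> = measure M {x \<in> space M. X x \<noteq> 0}"
    using assms(2) by (subst measure_distr) (auto intro!: arg_cong[where f = "measure M"])
  finally show ?thesis .
qed

lemma half_min_le_div_one_plus: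
  fixes S :: real
  assumes "S \<ge> 0"
  shows "min 1 S / 2 \<le> S / (1 + S)"
proof (cases "S \<le> 1")
  case True
  have "S / 2 \<le> S / (1 + S)" using divide_left_mono[of "1 + S" 2 S] True assms by simp
  with True show ?thesis by simp
next
  case False
  then show ?thesis by (simp add: field_simps)
qed

theorem corollary11:
  fixes M :: "'a measure" and N :: "'b measure"
    and X :: "nat \<Rightarrow> 'a \<Rightarrow> real" and Y :: "nat \<Rightarrow> 'b \<Rightarrow> real"
    and p :: "nat \<Rightarrow> real" and d :: nat
  assumes "prob_space M" and "prob_space N" and "d \<ge> 1"
    and bern: "\<And>i. i \<in> {1..d} \<Longrightarrow> bernoulli_rv M (X i) (p i)"
    and corr: "\<And>i j. i \<in> {1..d} \<Longrightarrow> j \<in> {1..d} \<Longrightarrow> i \<noteq> j \<Longrightarrow>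
                 prob_space.expectation M (\<lambda>x. X i x * X j x) \<le> p i * p j"
    and indep: "prob_space.indep_vars N (\<lambda>_. borel) Y {1..d}"
    and same_distr: "\<And>i. i \<in> {1..d} \<Longrightarrow> distr N borel (Y i) = distr M borel (X i)"
  shows "measure M {x \<in> space M. (\<Sum>i=1..d. X i x) > 0}
           \<ge> 1/2 * measure N {y \<in> space N. (\<Sum>i=1..d. Y i y) > 0}"
proof -
  interpret M: prob_space M by (rule assms(1))
  interpret N: prob_space N by (rule assms(2))
  define S where "S = (\<Sum>i=1..d. p i)"
  have Y_measurable: "Y i \<in> borel_measurable N" if "i \<in> {1..d}" for i
    using indep that by (auto simp: N.indep_vars_def2)
  have "measure N {y \<in> space N. (\<Sum>i=1..d. Y i y) > 0} \<le> (\<Sum>i=1..d. N.prob {y \<in> space N. Y i y \<noteq> 0})"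
    by (rule N.prob_sum_pos_le_sum_prob_nonzero) (simp_all add: Y_measurable)
  also have "\<dots> = S"
  proof (unfold S_def, rule sum.cong)
    fix i assume i: "i \<in> {1..d}"
    have "N.prob {y \<in> space N. Y i y \<noteq> 0} = M.prob {x \<in> space M. X i x \<noteq> 0}"
      using Y_measurable[OF i] bernoulli_rv_measurable[OF bern[OF i]] same_distr[OF i]
      by (rule measure_nonzero_eq_of_distr_eq)
    also have "\<dots> = p i" using bern[OF i] by (rule bernoulli_rv_measure_nonzero)
    finally show "N.prob {y \<in> space N. Y i y \<noteq> 0} = p i" .
  qed simp
  finally have upper: "measure N {y \<in> space N. (\<Sum>i=1..d. Y i y) > 0} \<le> S" .
  then have "S \<ge> 0" using measure_nonneg order_trans by blast
  have lower: "S / (1 + S) \<le> measure M {x \<in> space M. (\<Sum>i=1..d. X i x) > 0}"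
    unfolding S_def by (rule M.prob_sum_bernoulli_pos_ge) (use bern corr in auto)
  have "measure N {y \<in> space N. (\<Sum>i=1..d. Y i y) > 0} \<le> min 1 S"
    using upper N.prob_le_1 by simp
  with lower half_min_le_div_one_plus[OF \<open>S \<ge> 0\<close>] show ?thesis by linarith
qed

end
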